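(* Let $I\subset\mathbb{R}$ be an open interval and let $x_1,x_2,\varphi:I\to\mathbb{R}$ be smooth functions such that the curve $\gamma(u)=(x_1(u),x_2(u),\cos\varphi(u),\sin\varphi(u))$ in $\mathbb{E}^4$ is parametrized by arclength, i.e. $(x_1')^2+(x_2')^2+(\varphi')^2=1$, and such that $1-(\varphi'(u))^2\neq 0$ for all $u\in I$. Let $M$ be the surface with position vector $$X(u,v)=\big(x_1(u),\,x_2(u),\,\cos\varphi(u)\cos v-\sin\varphi(u)\sin v,\,\cos\varphi(u)\sin v+\sin\varphi(u)\cos v\big).$$ Then $M$ is flat, i.e. its Gaussian curvature vanishes identically.
   Context: The first fundamental form coefficients are $E=\langle X_u,X_u\rangle$, $F=\langle X_u,X_v\rangle$, $G=\langle X_v,X_v\rangle$, and regularity means $W^2=EG-F^2\neq 0$. The Gaussian curvature is that of the induced metric. *)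

theory Defs
  imports "HOL-Analysis.Analysis"
begin

definition smooth_on :: "real set \<Rightarrow> (real \<Rightarrow> real) \<Rightarrow> bool" where
  "smooth_on I f \<longleftrightarrow> (\<forall>k. \<forall>u\<in>I. ((deriv ^^ k) f) differentiable (at u))"

definition partial_u :: "(real \<Rightarrow> real \<Rightarrow> 'a::real_normed_vector) \<Rightarrow> real \<Rightarrow> real \<Rightarrow> 'a" where
  "partial_u X u v = vector_derivative (\<lambda>s. X s v) (at u)"

definition partial_v :: "(real \<Rightarrow> real \<Rightarrow> 'a::real_normed_vector) \<Rightarrow> real \<Rightarrow> real \<Rightarrow> 'a" where
  "partial_v X u v = vector_derivative (\<lambda>t. X u t) (at v)"

definition ffE :: "(real \<Rightarrow> real \<Rightarrow> 'a::{real_normed_vector,real_inner}) \<Rightarrow> real \<Rightarrow> real \<Rightarrow> real" where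
  "ffE X u v = inner (partial_u X u v) (partial_u X u v)"
definition ffF :: "(real \<Rightarrow> real \<Rightarrow> 'a::{real_normed_vector,real_inner}) \<Rightarrow> real \<Rightarrow> real \<Rightarrow> real" where
  "ffF X u v = inner (partial_u X u v) (partial_v X u v)"
definition ffG :: "(real \<Rightarrow> real \<Rightarrow> 'a::{real_normed_vector,real_inner}) \<Rightarrow> real \<Rightarrow> real \<Rightarrow> real" where
  "ffG X u v = inner (partial_v X u v) (partial_v X u v)"

definition det3 :: "real \<Rightarrow> real \<Rightarrow> real \<Rightarrow> real \<Rightarrow> real \<Rightarrow> real \<Rightarrow> real \<Rightarrow> real \<Rightarrow> real \<Rightarrow> real" where
  "det3 a b c d e f g h i = a*(e*i - f*h) - b*(d*i - f*g) + c*(d*h - e*g)"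

text \<open>Gaussian curvature of the induced metric E du^2 + 2F du dv + G dv^2,
  given by the Brioschi formula (it depends only on the metric).\<close>
definition gauss_curvature :: "(real \<Rightarrow> real \<Rightarrow> 'a::{real_normed_vector,real_inner}) \<Rightarrow> real \<Rightarrow> real \<Rightarrow> real" where
  "gauss_curvature X u v =
     (let E = ffE X; F = ffF X; G = ffG X;
          e = E u v; f = F u v; g = G u v;
          Eu = partial_u E u v; Ev = partial_v E u v;
          Fu = partial_u F u v; Fv = partial_v F u v;
          Gu = partial_u G u v; Gv = partial_v G u v;
          Evv = partial_v (partial_v E) u v;
          Fuv = partial_v (partial_u F) u v;
          Guu = partial_u (partial_u G) u v
      in (det3 (- Evv/2 + Fuv - Guu/2) (Eu/2) (Fu - Ev/2)
               (Fv - Gu/2) e f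
               (Gv/2) f g
          - det3 0 (Ev/2) (Gu/2)
                 (Ev/2) e f
                 (Gu/2) f g) / (e*g - f^2)^2)"

end

theory Submission
  imports Defs
begin

text \<open>The surface is X(u,v) = (x1 u, x2 u, cos (\<phi> u + v), sin (\<phi> u + v)). Its first fundamental
  form is E = x1'^2 + x2'^2 + \<phi>'^2 = 1, F = \<phi>'(u), G = 1. Since E and G are constant and F does not
  depend on v, every derivative occurring in the Brioschi formula either vanishes or is multiplied
  by a vanishing entry, so K = 0.\<close>

lemma vector_derivative_eq_0_on_open:
  assumes "open S" "x \<in> S" "\<And>y. y \<in> S \<Longrightarrow> f y = c"
  shows "vector_derivative f (at x) = 0"
proof -
  have "vector_derivative f (at x) = vector_derivative (\<lambda>_. c) (at x)"
    using assms by (intro vector_derivative_cong_eq) (auto simp: eventually_nhds)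
  then show ?thesis by simp
qed

lemma partial_u_eq_0_on_open:
  assumes "open S" "u \<in> S" "\<And>s. s \<in> S \<Longrightarrow> F s v = c"
  shows "partial_u F u v = 0"
  unfolding partial_u_def using assms by (rule vector_derivative_eq_0_on_open)

lemma partial_v_eq_0:
  assumes "\<And>t. F u t = c"
  shows "partial_v F u v = 0"
  unfolding partial_v_def using assms by (intro vector_derivative_eq_0_on_open[OF open_UNIV]) auto

lemma partial_u_indep_v:
  assumes "open S" "u \<in> S" "\<And>s t. s \<in> S \<Longrightarrow> F s t = f s"
  shows "partial_u F u v = vector_derivative f (at u)"
  unfolding partial_u_def using assms
  by (intro vector_derivative_cong_eq) (auto simp: eventually_nhds)

lemma gauss_curvature_eq_0_if_E_G_const_F_indep_v:
  assumes "open S" "u \<in> S"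
    and E: "\<And>s t. s \<in> S \<Longrightarrow> ffE X s t = e"
    and F: "\<And>s t. s \<in> S \<Longrightarrow> ffF X s t = f s"
    and G: "\<And>s t. s \<in> S \<Longrightarrow> ffG X s t = g"
  shows "gauss_curvature X u v = 0"
proof -
  have Eu: "partial_u (ffE X) u v = 0"
    using assms(1,2) E by (rule partial_u_eq_0_on_open)
  have Ev: "partial_v (ffE X) u t = 0" for t
    using assms(2) E by (intro partial_v_eq_0) blast
  have Evv: "partial_v (partial_v (ffE X)) u v = 0"
    using Ev by (rule partial_v_eq_0)
  have Fv: "partial_v (ffF X) u v = 0"
    using assms(2) F by (intro partial_v_eq_0) blast
  have Fuv: "partial_v (partial_u (ffF X)) u v = 0"
    by (rule partial_v_eq_0, rule partial_u_indep_v[OF assms(1,2) F])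
  have Gu: "partial_u (ffG X) s v = 0" if "s \<in> S" for s
    using assms(1) that G by (rule partial_u_eq_0_on_open)
  have Gv: "partial_v (ffG X) u v = 0"
    using assms(2) G by (intro partial_v_eq_0) blast
  have Guu: "partial_u (partial_u (ffG X)) u v = 0"
    using assms(1,2) Gu by (rule partial_u_eq_0_on_open)
  show ?thesis
    unfolding gauss_curvature_def Let_def
    by (simp add: Eu Ev Evv Fv Fuv Gu[OF assms(2)] Gv Guu det3_def)
qed

lemma vector4_nth [simp]:
  "(vector [a, b, c, d] :: 'a::zero^4) $ 1 = a"
  "(vector [a, b, c, d] :: 'a::zero^4) $ 2 = b"
  "(vector [a, b, c, d] :: 'a::zero^4) $ 3 = c"
  "(vector [a, b, c, d] :: 'a::zero^4) $ 4 = d"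
  unfolding vector_def by simp_all

lemma vector4_eq_sum_axis:
  "(vector [a, b, c, d] :: real^4) =
     a *\<^sub>R axis 1 1 + b *\<^sub>R axis 2 1 + c *\<^sub>R axis 3 1 + d *\<^sub>R axis 4 1"
  by (simp add: vec_eq_iff forall_4 axis_def)

lemma inner_vector4:
  "inner (vector [a, b, c, d] :: real^4) (vector [a', b', c', d']) = a*a' + b*b' + c*c' + d*d'"
  by (simp add: inner_vec_def sum_4)

lemma has_vector_derivative_vector4:
  assumes "(f1 has_real_derivative d1) (at x within S)" "(f2 has_real_derivative d2) (at x within S)"
    and "(f3 has_real_derivative d3) (at x within S)" "(f4 has_real_derivative d4) (at x within S)"
  shows "((\<lambda>s. vector [f1 s, f2 s, f3 s, f4 s] :: real^4) has_vector_derivative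
           vector [d1, d2, d3, d4]) (at x within S)"
proof -
  have scaled: "((\<lambda>s. f s *\<^sub>R a) has_vector_derivative d *\<^sub>R a) (at x within S)"
    if "(f has_real_derivative d) (at x within S)" for f d and a :: "real^4"
    using bounded_linear.has_vector_derivative[OF bounded_linear_scaleR_left
        that[unfolded has_real_derivative_iff_has_vector_derivative]] .
  show ?thesis
    unfolding vector4_eq_sum_axis by (intro has_vector_derivative_add scaled assms)
qed

context
  fixes x1 x2 \<phi> :: "real \<Rightarrow> real"
begin

definition rotational_surface :: "real \<Rightarrow> real \<Rightarrow> real^4" where
  "rotational_surface u v = vector [x1 u, x2 u, cos (\<phi> u + v), sin (\<phi> u + v)]"

lemma partial_v_rotational_surface:
  "partial_v rotational_surface u v = vector [0, 0, - sin (\<phi> u + v), cos (\<phi> u + v)]"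
  unfolding partial_v_def rotational_surface_def
  by (intro vector_derivative_at has_vector_derivative_vector4) (auto intro!: derivative_eq_intros)

lemma partial_u_rotational_surface:
  assumes "x1 differentiable (at u)" "x2 differentiable (at u)" "\<phi> differentiable (at u)"
  shows "partial_u rotational_surface u v =
    vector [deriv x1 u, deriv x2 u, - deriv \<phi> u * sin (\<phi> u + v), deriv \<phi> u * cos (\<phi> u + v)]"
proof -
  have "(f has_real_derivative deriv f u) (at u)" if "f differentiable (at u)" for f
    using that by (simp add: DERIV_deriv_iff_real_differentiable)
  with assms show ?thesis
    unfolding partial_u_def rotational_surface_def
    by (intro vector_derivative_at has_vector_derivative_vector4)
      (auto intro!: derivative_eq_intros)
qed

lemma ffG_rotational_surface: "ffG rotational_surface u v = 1"
  by (simp add: ffG_def partial_v_rotational_surface inner_vector4 flip: power2_eq_square)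

lemma ffF_rotational_surface:
  assumes "x1 differentiable (at u)" "x2 differentiable (at u)" "\<phi> differentiable (at u)"
  shows "ffF rotational_surface u v = deriv \<phi> u"
  by (simp add: ffF_def partial_u_rotational_surface[OF assms] partial_v_rotational_surface
      inner_vector4 cos_squared_eq algebra_simps flip: power2_eq_square)

lemma ffE_rotational_surface:
  assumes "x1 differentiable (at u)" "x2 differentiable (at u)" "\<phi> differentiable (at u)"
  shows "ffE rotational_surface u v = (deriv x1 u)\<^sup>2 + (deriv x2 u)\<^sup>2 + (deriv \<phi> u)\<^sup>2"
  by (simp add: ffE_def partial_u_rotational_surface[OF assms]
      inner_vector4 cos_squared_eq power_mult_distrib algebra_simps flip: power2_eq_square)

end

lemma smooth_on_imp_differentiable:
  "smooth_on I f \<Longrightarrow> u \<in> I \<Longrightarrow> f differentiable (at u)"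
  unfolding smooth_on_def by (metis funpow_0)

theorem proposition1:
  fixes I :: "real set" and x1 x2 \<phi> :: "real \<Rightarrow> real"
  assumes "open I" and "is_interval I"
    and "smooth_on I x1" and "smooth_on I x2" and "smooth_on I \<phi>"
    and "\<forall>u\<in>I. (deriv x1 u)^2 + (deriv x2 u)^2 + (deriv \<phi> u)^2 = 1"
    and "\<forall>u\<in>I. 1 - (deriv \<phi> u)^2 \<noteq> 0"
  defines "X \<equiv> (\<lambda>u v. vector [x1 u, x2 u,
                  cos (\<phi> u) * cos v - sin (\<phi> u) * sin v,
                  cos (\<phi> u) * sin v + sin (\<phi> u) * cos v] :: real^4)"
  shows "\<forall>u\<in>I. \<forall>v. gauss_curvature X u v = 0"
proof (intro ballI allI)
  fix u v assume "u \<in> I"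
  have X: "X = rotational_surface x1 x2 \<phi>"
    unfolding X_def rotational_surface_def by (simp add: cos_add sin_add algebra_simps)
  have diff: "x1 differentiable (at s)" "x2 differentiable (at s)" "\<phi> differentiable (at s)"
    if "s \<in> I" for s
    using assms(3-5) that by (auto intro: smooth_on_imp_differentiable)
  show "gauss_curvature X u v = 0"
    unfolding X
    using \<open>open I\<close> \<open>u \<in> I\<close>
  proof (rule gauss_curvature_eq_0_if_E_G_const_F_indep_v)
    show "ffE (rotational_surface x1 x2 \<phi>) s t = 1" if "s \<in> I" for s t
      using ffE_rotational_surface[OF diff[OF that]] assms(6) that by simp
    show "ffF (rotational_surface x1 x2 \<phi>) s t = deriv \<phi> s" if "s \<in> I" for s t
      using ffF_rotational_surface[OF diff[OF that]] .
    show "ffG (rotational_surface x1 x2 \<phi>) s t = 1" for s t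
      by (rule ffG_rotational_surface)
  qed
qed

end
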